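(* Let $T=(T_1,\dots,T_l)$ be a finite collection of differential operators with constant coefficients on $\mathbb{T}^2$ such that for every admissible line $\Lambda$ the $\Lambda$-senior parts of $T_1,\dots,T_l$ span a linear space of dimension at most $1$. Then the principal parts of all $T_j$ are scalar multiples of a single operator.
   Context: $\partial_1,\partial_2$ are the derivatives on $\mathbb{T}^2$ (parametrised by $t\mapsto e^{2\pi it}$). Let $\mathcal{M}\subset\mathbb{Z}_{\geqslant0}^2$ be the (nonempty) set of biindices $(\alpha,\beta)$ of monomials $\partial_1^\alpha\partial_2^\beta$ occurring with nonzero coefficient in at least one $T_j$. A straight line $\Lambda$ is admissible if it passes through at least two points of $\mathcal{M}$, intersects both positive coordinate semiaxes, and no point of $\mathcal{M}$ lies strictly above it. The $\Lambda$-senior part of an operator is the sum of its terms whose biindices lie on $\Lambda$. If admissible lines exist, the core is the union over all admissible lines $\Lambda$ of the convex hull of $\Lambda\cap\mathcal{M}$; if none exist, the core is the single point of $\mathcal{M}$ that dominates every point of $\mathcal{M}$ coordinatewise. The principal part of $T_j$ is the sum of the terms of $T_j$ whose biindices lie in the core. *)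

theory Defs
  imports "HOL-Analysis.Analysis"
begin

text \<open>A differential operator with constant coefficients on the 2-torus,
  sum of c(a,b) d1^a d2^b, is represented by its coefficient function
  nat \<times> nat \<Rightarrow> complex (finitely supported).\<close>

type_synonym diffop = "nat \<times> nat \<Rightarrow> complex"

definition pt :: "nat \<times> nat \<Rightarrow> real \<times> real" where
  "pt m = (real (fst m), real (snd m))"

definition is_line :: "(real \<times> real) set \<Rightarrow> bool" where
  "is_line L \<longleftrightarrow> (\<exists>a b c. (a, b) \<noteq> (0, 0) \<and> L = {(x, y). a * x + b * y = c})"

definition strictly_above :: "(real \<times> real) set \<Rightarrow> real \<times> real \<Rightarrow> bool" where
  "strictly_above L p \<longleftrightarrow> (\<exists>y'. (fst p, y') \<in> L \<and> y' < snd p)"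

definition biindices :: "nat \<Rightarrow> (nat \<Rightarrow> diffop) \<Rightarrow> (nat \<times> nat) set" where
  "biindices l T = {m. \<exists>j<l. T j m \<noteq> 0}"

definition admissible :: "(nat \<times> nat) set \<Rightarrow> (real \<times> real) set \<Rightarrow> bool" where
  "admissible M L \<longleftrightarrow> is_line L
     \<and> (\<exists>m1\<in>M. \<exists>m2\<in>M. m1 \<noteq> m2 \<and> pt m1 \<in> L \<and> pt m2 \<in> L)
     \<and> (\<exists>x>0. (x, 0) \<in> L) \<and> (\<exists>y>0. (0, y) \<in> L)
     \<and> (\<forall>m\<in>M. \<not> strictly_above L (pt m))"

definition senior_part :: "(real \<times> real) set \<Rightarrow> diffop \<Rightarrow> diffop" where
  "senior_part L P = (\<lambda>m. if pt m \<in> L then P m else 0)"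

definition core :: "(nat \<times> nat) set \<Rightarrow> (real \<times> real) set" where
  "core M = (if \<exists>L. admissible M L
     then (\<Union>L\<in>{L. admissible M L}. convex hull (pt ` (M \<inter> {m. pt m \<in> L})))
     else pt ` {m\<in>M. \<forall>m'\<in>M. fst m' \<le> fst m \<and> snd m' \<le> snd m})"

definition principal_part :: "(nat \<times> nat) set \<Rightarrow> diffop \<Rightarrow> diffop" where
  "principal_part M P = (\<lambda>m. if pt m \<in> core M then P m else 0)"

end

theory Submission
  imports Defs
begin

text \<open>Every admissible line has a positive normal \<open>(a, b)\<close> and supports the biindex set
  from above, so the points of \<open>M\<close> on admissible lines are the vertices of the upper Newton
  polygon. Two points on a common admissible line carry proportional coefficient columns
  \<open>(T\<^sub>j m)\<^sub>j\<close> by hypothesis, and proportionality passes through any point of \<open>M\<close>, where some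
  column entry is nonzero. Walking from one vertex to the next along the edge of steepest
  slope connects any two vertices, so all columns on the core are proportional, i.e. the
  principal parts are multiples of one operator.\<close>

section \<open>Admissible lines as supporting lines\<close>

lemma case_prod_pt [simp]: "(case pt m of (x, y) \<Rightarrow> f x y) = f (real (fst m)) (real (snd m))"
  by (simp add: pt_def)

lemma inj_pt: "inj pt"
  by (auto simp: inj_def pt_def prod_eq_iff)

lemma convex_line: "convex {(x::real, y::real). a * x + b * y = c}"
proof -
  have "{(x::real, y::real). a * x + b * y = c} = {z. inner (a, b) z = c}" by auto
  then show ?thesis using convex_hyperplane by metis
qed

lemma strictly_above_line_iff:
  assumes "b > 0"
  shows "strictly_above {(x, y). a * x + b * y = c} (pt m) \<longleftrightarrow>
    c < a * real (fst m) + b * real (snd m)"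
proof
  assume "strictly_above {(x, y). a * x + b * y = c} (pt m)"
  then obtain y where "a * real (fst m) + b * y = c" "y < real (snd m)"
    by (auto simp: strictly_above_def pt_def)
  with assms show "c < a * real (fst m) + b * real (snd m)"
    by (smt (verit) mult_strict_left_mono)
next
  assume "c < a * real (fst m) + b * real (snd m)"
  with assms show "strictly_above {(x, y). a * x + b * y = c} (pt m)"
    unfolding strictly_above_def pt_def
    by (intro exI[of _ "(c - a * real (fst m)) / b"]) (simp add: field_simps)
qed

lemma admissible_line_positive_normal:
  assumes "admissible M L"
  obtains a b c where "a > 0" "b > 0" "c > 0" "L = {(x, y). a * x + b * y = c}"
proof -
  from assms obtain a b c where ab: "(a, b) \<noteq> (0, 0)" and L: "L = {(x, y). a * x + b * y = c}"
    unfolding admissible_def is_line_def by blast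
  from assms L obtain x0 y0 where x0: "x0 > 0" "a * x0 = c" and y0: "y0 > 0" "b * y0 = c"
    unfolding admissible_def by auto
  have "c \<noteq> 0" using ab x0 y0 by auto
  then consider "c > 0" | "c < 0" by linarith
  then show thesis
  proof cases
    case 1
    with x0 y0 have "a > 0" "b > 0" by (smt (verit) mult_nonpos_nonneg)+
    with 1 L that show thesis by blast
  next
    case 2
    with x0 y0 have "- a > 0" "- b > 0" "- c > 0" by (smt (verit) mult_nonneg_nonneg)+
    moreover have "L = {(x, y). (- a) * x + (- b) * y = - c}" using L by auto
    ultimately show thesis using that by blast
  qed
qed

lemma admissible_imp_supporting:
  assumes "admissible M L"
  obtains a b c where "a > 0" "b > 0" "c > 0" "L = {(x, y). a * x + b * y = c}"
    "\<forall>m\<in>M. a * real (fst m) + b * real (snd m) \<le> c"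
proof -
  obtain a b c where abc: "a > 0" "b > 0" "c > 0" "L = {(x, y). a * x + b * y = c}"
    using admissible_line_positive_normal[OF assms] .
  with assms have "\<forall>m\<in>M. a * real (fst m) + b * real (snd m) \<le> c"
    unfolding admissible_def by (auto simp: strictly_above_line_iff not_less)
  with abc that show thesis by blast
qed

lemma supporting_line_admissible:
  assumes "a > 0" "b > 0" "c > 0"
    and below: "\<forall>m\<in>M. a * real (fst m) + b * real (snd m) \<le> c"
    and "p \<in> M" "q \<in> M" "p \<noteq> q"
    and "a * real (fst p) + b * real (snd p) = c" "a * real (fst q) + b * real (snd q) = c"
  shows "admissible M {(x, y). a * x + b * y = c}"
  unfolding admissible_def is_line_def
proof (intro conjI)
  show "\<exists>x>0. (x, 0) \<in> {(x, y). a * x + b * y = c}"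
    using assms(1,3) by (intro exI[of _ "c / a"]) auto
  show "\<exists>y>0. (0, y) \<in> {(x, y). a * x + b * y = c}"
    using assms(2,3) by (intro exI[of _ "c / b"]) auto
  show "\<forall>m\<in>M. \<not> strictly_above {(x, y). a * x + b * y = c} (pt m)"
    using below assms(2) by (simp add: strictly_above_line_iff not_less)
  show "\<exists>a' b' c'. (a', b') \<noteq> (0, 0) \<and> {(x, y). a * x + b * y = c} = {(x, y). a' * x + b' * y = c'}"
    using assms(1) by (intro exI[of _ a] exI[of _ b] exI[of _ c]) auto
qed (use assms in auto)

definition admissible_points :: "(nat \<times> nat) set \<Rightarrow> (nat \<times> nat) set" where
  "admissible_points M = {m \<in> M. \<exists>L. admissible M L \<and> pt m \<in> L}"

lemma admissible_points_supporting:
  assumes "m \<in> admissible_points M"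
  obtains a b where "a > 0" "b > 0"
    "\<forall>m'\<in>M. a * real (fst m') + b * real (snd m') \<le> a * real (fst m) + b * real (snd m)"
proof -
  obtain L where L: "admissible M L" "pt m \<in> L"
    using assms unfolding admissible_points_def by blast
  obtain a b c where "a > 0" "b > 0" "L = {(x, y). a * x + b * y = c}"
    "\<forall>m'\<in>M. a * real (fst m') + b * real (snd m') \<le> c"
    using admissible_imp_supporting[OF L(1)] .
  with L(2) that show thesis by auto
qed

lemma admissible_points_eq_if_fst_eq:
  assumes "p \<in> admissible_points M" "q \<in> admissible_points M" "fst p = fst q"
  shows "p = q"
proof -
  have "p \<in> M" "q \<in> M" using assms unfolding admissible_points_def by auto
  obtain a b where "b > 0"
    "\<forall>m\<in>M. a * real (fst m) + b * real (snd m) \<le> a * real (fst p) + b * real (snd p)"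
    using admissible_points_supporting[OF assms(1)] by metis
  with \<open>q \<in> M\<close> assms(3) have "snd q \<le> snd p" by force
  obtain a' b' where "b' > 0"
    "\<forall>m\<in>M. a' * real (fst m) + b' * real (snd m) \<le> a' * real (fst q) + b' * real (snd q)"
    using admissible_points_supporting[OF assms(2)] by metis
  with \<open>p \<in> M\<close> assms(3) have "snd p \<le> snd q" by force
  with \<open>snd q \<le> snd p\<close> assms(3) show ?thesis by (simp add: prod_eq_iff)
qed

section \<open>Connecting the vertices of the upper Newton polygon\<close>

lemma max_slope_line_supports:
  fixes p r :: "nat \<times> nat"
  defines "A \<equiv> real (snd p) - real (snd r)" and "B \<equiv> real (fst r) - real (fst p)"
  assumes "a > 0" "b > 0"
    and supp: "\<forall>m\<in>M. a * real (fst m) + b * real (snd m) \<le> a * real (fst p) + b * real (snd p)"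
    and "r \<in> M" "fst p < fst r"
    and steepest: "\<forall>m\<in>M. fst p < fst m \<longrightarrow>
      (real (snd m) - real (snd p)) * B \<le> (real (snd r) - real (snd p)) * (real (fst m) - real (fst p))"
  shows "\<forall>m\<in>M. A * real (fst m) + B * real (snd m) \<le> A * real (fst p) + B * real (snd p)"
proof
  fix m assume "m \<in> M"
  define dx dy where "dx = real (fst m) - real (fst p)" and "dy = real (snd m) - real (snd p)"
  have B0: "B > 0" using \<open>fst p < fst r\<close> unfolding B_def by simp
  have "a * B \<le> b * A"
    using supp \<open>r \<in> M\<close> unfolding A_def B_def by (auto simp: algebra_simps)
  have mb: "b * dy \<le> - a * dx" using supp \<open>m \<in> M\<close> unfolding dx_def dy_def by (auto simp: algebra_simps)
  consider "fst p < fst m" | "fst m = fst p" | "fst m < fst p" by linarith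
  then have "A * dx + B * dy \<le> 0"
  proof cases
    case 1
    then show ?thesis using steepest \<open>m \<in> M\<close> unfolding A_def dx_def dy_def
      by (auto simp: algebra_simps)
  next
    case 2
    with mb \<open>b > 0\<close> have "dy \<le> 0" unfolding dx_def by (simp add: mult_le_0_iff)
    with 2 B0 show ?thesis unfolding dx_def by (simp add: mult_nonneg_nonpos)
  next
    case 3
    then have "dx < 0" unfolding dx_def by simp
    have "b * (B * dy) \<le> B * (- a * dx)" using mult_left_mono[OF mb less_imp_le[OF B0]] by (simp add: algebra_simps)
    also have "\<dots> = (a * B) * (- dx)" by simp
    also have "\<dots> \<le> (b * A) * (- dx)" using \<open>a * B \<le> b * A\<close> \<open>dx < 0\<close> by (simp add: mult_right_mono)
    finally have "b * (B * dy) \<le> b * (A * (- dx))" by (simp add: mult.assoc mult.left_commute)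
    then have "B * dy \<le> A * (- dx)" using \<open>b > 0\<close> by (rule mult_left_le_imp_le)
    then show ?thesis by simp
  qed
  then show "A * real (fst m) + B * real (snd m) \<le> A * real (fst p) + B * real (snd p)"
    unfolding dx_def dy_def by (simp add: algebra_simps)
qed

text \<open>The line through \<open>p\<close> and the point of \<open>M\<close> seen from \<open>p\<close> under the steepest slope to
  the right supports \<open>M\<close>; its normal is positive because \<open>p\<close> is already supported by a line with
  positive normal.\<close>
lemma steepest_edge:
  assumes "finite M" "p \<in> M" "a > 0" "b > 0"
    and supp: "\<forall>m\<in>M. a * real (fst m) + b * real (snd m) \<le> a * real (fst p) + b * real (snd p)"
    and "q \<in> M" "fst p < fst q"
  obtains r L where "r \<in> M" "fst p < fst r" "admissible M L" "pt p \<in> L" "pt r \<in> L"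
proof -
  define S where "S = {m \<in> M. fst p < fst m}"
  define slope where "slope m = (real (snd m) - real (snd p)) / (real (fst m) - real (fst p))" for m
  have "finite S" "q \<in> S" using assms unfolding S_def by auto
  then have "Max (slope ` S) \<in> slope ` S" by (intro Max_in) auto
  then obtain r where "r \<in> S" and r_max: "slope r = Max (slope ` S)" by auto
  then have "r \<in> M" "fst p < fst r" unfolding S_def by auto
  define A where "A = real (snd p) - real (snd r)"
  define B where "B = real (fst r) - real (fst p)"
  define C where "C = A * real (fst p) + B * real (snd p)"
  have "\<forall>m\<in>M. fst p < fst m \<longrightarrow>
      (real (snd m) - real (snd p)) * B \<le> (real (snd r) - real (snd p)) * (real (fst m) - real (fst p))"
  proof (intro ballI impI)
    fix m assume "m \<in> M" "fst p < fst m"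
    then have "slope m \<le> slope r" using \<open>finite S\<close> r_max unfolding S_def by simp
    with \<open>fst p < fst m\<close> \<open>fst p < fst r\<close>
    show "(real (snd m) - real (snd p)) * B \<le> (real (snd r) - real (snd p)) * (real (fst m) - real (fst p))"
      unfolding slope_def B_def by (simp add: divide_simps)
  qed
  then have below: "\<forall>m\<in>M. A * real (fst m) + B * real (snd m) \<le> C"
    using max_slope_line_supports[OF assms(3,4) supp \<open>r \<in> M\<close> \<open>fst p < fst r\<close>]
    unfolding A_def B_def C_def by blast
  have "B > 0" using \<open>fst p < fst r\<close> unfolding B_def by simp
  have "a * real (fst p) < a * real (fst r)" using \<open>a > 0\<close> \<open>fst p < fst r\<close> by simp
  with supp \<open>r \<in> M\<close> have "b * real (snd r) < b * real (snd p)" by fastforce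
  with \<open>b > 0\<close> have "A > 0" unfolding A_def by simp
  then have "C > 0" using \<open>B > 0\<close> unfolding C_def A_def by (simp add: add_nonneg_pos)
  have r_on: "A * real (fst r) + B * real (snd r) = C"
    unfolding A_def B_def C_def by (simp add: algebra_simps)
  have "admissible M {(x, y). A * x + B * y = C}"
    using supporting_line_admissible[OF \<open>A > 0\<close> \<open>B > 0\<close> \<open>C > 0\<close> below \<open>p \<in> M\<close> \<open>r \<in> M\<close> _ _ r_on]
      \<open>fst p < fst r\<close> unfolding C_def by auto
  from that[OF \<open>r \<in> M\<close> \<open>fst p < fst r\<close> this] r_on show thesis unfolding C_def by simp
qed

lemma admissible_point_between_on_line:
  assumes L: "admissible M L" and "p \<in> M" "r \<in> M" "pt p \<in> L" "pt r \<in> L"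
    and q: "q \<in> admissible_points M" and "fst p < fst q" "fst q \<le> fst r"
  shows "pt q \<in> L"
proof -
  obtain A B C where "B > 0" and L_eq: "L = {(x, y). A * x + B * y = C}"
    and below: "\<forall>m\<in>M. A * real (fst m) + B * real (snd m) \<le> C"
    using admissible_imp_supporting[OF L] by metis
  obtain a b where "b > 0" and supp:
    "\<forall>m\<in>M. a * real (fst m) + b * real (snd m) \<le> a * real (fst q) + b * real (snd q)"
    using admissible_points_supporting[OF q] by metis
  define dx1 dx2 where "dx1 = real (fst q) - real (fst p)" and "dx2 = real (fst r) - real (fst q)"
  have "dx1 > 0" "dx2 \<ge> 0" using assms(7,8) unfolding dx1_def dx2_def by auto
  have h1: "b * (real (snd p) - real (snd q)) \<le> a * dx1"
    using supp \<open>p \<in> M\<close> unfolding dx1_def by (auto simp: algebra_simps)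
  have h2: "b * (real (snd r) - real (snd q)) \<le> - (a * dx2)"
    using supp \<open>r \<in> M\<close> unfolding dx2_def by (auto simp: algebra_simps)
  text \<open>\<open>q\<close> lies above the chord from \<open>p\<close> to \<open>r\<close>, since both lie below a supporting line of \<open>q\<close>.\<close>
  have "b * (dx1 * (real (snd q) - real (snd r)) + dx2 * (real (snd q) - real (snd p))) \<ge> 0"
    using mult_left_mono[OF h2 less_imp_le[OF \<open>dx1 > 0\<close>]] mult_left_mono[OF h1 \<open>dx2 \<ge> 0\<close>]
    by (simp add: algebra_simps)
  with \<open>b > 0\<close> have above_chord: "dx1 * (real (snd q) - real (snd r)) + dx2 * (real (snd q) - real (snd p)) \<ge> 0"
    by (simp add: zero_le_mult_iff)
  define h where "h = A * real (fst q) + B * real (snd q) - C"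
  have hp: "h = A * dx1 + B * (real (snd q) - real (snd p))"
    using assms(4) L_eq unfolding h_def dx1_def by (auto simp: algebra_simps)
  have hr: "h = - (A * dx2) + B * (real (snd q) - real (snd r))"
    using assms(5) L_eq unfolding h_def dx2_def by (auto simp: algebra_simps)
  have "(dx1 + dx2) * h = dx1 * h + dx2 * h" by (simp add: distrib_right)
  also have "\<dots> = dx1 * (- (A * dx2) + B * (real (snd q) - real (snd r)))
      + dx2 * (A * dx1 + B * (real (snd q) - real (snd p)))"
    using hp hr by metis
  also have "\<dots> = B * (dx1 * (real (snd q) - real (snd r)) + dx2 * (real (snd q) - real (snd p)))"
    by (simp add: algebra_simps)
  finally have "(dx1 + dx2) * h = B * (dx1 * (real (snd q) - real (snd r)) + dx2 * (real (snd q) - real (snd p)))" .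
  with above_chord \<open>B > 0\<close> have "(dx1 + dx2) * h \<ge> 0" by simp
  with \<open>dx1 > 0\<close> \<open>dx2 \<ge> 0\<close> have "h \<ge> 0" by (simp add: zero_le_mult_iff)
  with below \<open>q \<in> admissible_points M\<close> have "A * real (fst q) + B * real (snd q) = C"
    unfolding admissible_points_def h_def by fastforce
  then show ?thesis using L_eq by simp
qed

lemma admissible_points_chain:
  assumes "finite M"
    and same_line: "\<And>L p q. admissible M L \<Longrightarrow> p \<in> M \<Longrightarrow> q \<in> M \<Longrightarrow>
      pt p \<in> L \<Longrightarrow> pt q \<in> L \<Longrightarrow> R p q"
    and trans: "\<And>p v q. R p v \<Longrightarrow> R v q \<Longrightarrow> v \<in> M \<Longrightarrow> R p q"
  shows "p \<in> admissible_points M \<Longrightarrow> q \<in> admissible_points M \<Longrightarrow> fst p < fst q \<Longrightarrow> R p q"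
proof (induction "fst q - fst p" arbitrary: p rule: less_induct)
  case less
  have "p \<in> M" "q \<in> M" using less.prems unfolding admissible_points_def by auto
  obtain a b where "a > 0" "b > 0" and supp:
    "\<forall>m\<in>M. a * real (fst m) + b * real (snd m) \<le> a * real (fst p) + b * real (snd p)"
    using admissible_points_supporting[OF less.prems(1)] by metis
  obtain r L where "r \<in> M" "fst p < fst r" "admissible M L" "pt p \<in> L" "pt r \<in> L"
    using steepest_edge[OF \<open>finite M\<close> \<open>p \<in> M\<close> \<open>a > 0\<close> \<open>b > 0\<close> supp \<open>q \<in> M\<close> less.prems(3)] .
  show ?case
  proof (cases "fst r < fst q")
    case True
    have "r \<in> admissible_points M"
      unfolding admissible_points_def using \<open>r \<in> M\<close> \<open>admissible M L\<close> \<open>pt r \<in> L\<close> by blast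
    then have "R r q" using less.hyps[of r] True \<open>fst p < fst r\<close> less.prems(2) by auto
    moreover have "R p r"
      using same_line \<open>admissible M L\<close> \<open>p \<in> M\<close> \<open>r \<in> M\<close> \<open>pt p \<in> L\<close> \<open>pt r \<in> L\<close> .
    ultimately show ?thesis using trans \<open>r \<in> M\<close> by blast
  next
    case False
    then have "pt q \<in> L"
      using admissible_point_between_on_line[OF \<open>admissible M L\<close> \<open>p \<in> M\<close> \<open>r \<in> M\<close> \<open>pt p \<in> L\<close>
          \<open>pt r \<in> L\<close> less.prems(2,3)] by simp
    then show ?thesis using same_line \<open>admissible M L\<close> \<open>p \<in> M\<close> \<open>q \<in> M\<close> \<open>pt p \<in> L\<close> by blast
  qed
qed

definition principal_indices :: "(nat \<times> nat) set \<Rightarrow> (nat \<times> nat) set" where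
  "principal_indices M = (if \<exists>L. admissible M L then admissible_points M
     else {m \<in> M. \<forall>m'\<in>M. fst m' \<le> fst m \<and> snd m' \<le> snd m})"

lemma pt_in_core_iff:
  assumes "m \<in> M"
  shows "pt m \<in> core M \<longleftrightarrow> m \<in> principal_indices M"
proof (cases "\<exists>L. admissible M L")
  case True
  have "pt m \<in> convex hull (pt ` (M \<inter> {m. pt m \<in> L})) \<longleftrightarrow> pt m \<in> L" if L: "admissible M L" for L
  proof
    obtain a b c where "L = {(x, y). a * x + b * y = c}"
      using admissible_line_positive_normal[OF L] by metis
    then have "convex L" using convex_line by simp
    then have "convex hull (pt ` (M \<inter> {m. pt m \<in> L})) \<subseteq> L"
      by (intro hull_minimal) blast+
    then show "pt m \<in> convex hull (pt ` (M \<inter> {m. pt m \<in> L})) \<Longrightarrow> pt m \<in> L" by blast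
  qed (use assms in \<open>auto intro: hull_inc\<close>)
  with True assms show ?thesis
    unfolding core_def principal_indices_def admissible_points_def by auto
next
  case False
  then show ?thesis unfolding core_def principal_indices_def if_not_P[OF False]
    by (simp add: inj_image_mem_iff[OF inj_pt])
qed

lemma principal_part_eq_restriction:
  assumes "{m. P m \<noteq> 0} \<subseteq> M"
  shows "principal_part M P = (\<lambda>m. if m \<in> principal_indices M then P m else 0)"
proof
  fix m
  show "principal_part M P m = (if m \<in> principal_indices M then P m else 0)"
  proof (cases "P m = 0")
    case False
    with assms have "m \<in> M" by blast
    then show ?thesis unfolding principal_part_def by (simp add: pt_in_core_iff)
  qed (simp add: principal_part_def)
qed

section \<open>Proportional coefficient columns\<close>

definition coeff_proportional :: "nat \<Rightarrow> (nat \<Rightarrow> diffop) \<Rightarrow> nat \<times> nat \<Rightarrow> nat \<times> nat \<Rightarrow> bool" where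
  "coeff_proportional l T p q \<longleftrightarrow> (\<forall>j<l. \<forall>k<l. T j p * T k q = T j q * T k p)"

lemma coeff_proportional_refl: "coeff_proportional l T p p"
  unfolding coeff_proportional_def by (simp add: mult.commute)

lemma coeff_proportional_sym: "coeff_proportional l T p q \<Longrightarrow> coeff_proportional l T q p"
  unfolding coeff_proportional_def by (metis mult.commute)

lemma coeff_proportional_trans:
  assumes pv: "coeff_proportional l T p v" and vq: "coeff_proportional l T v q"
    and "i < l" "T i v \<noteq> 0"
  shows "coeff_proportional l T p q"
  unfolding coeff_proportional_def
proof (intro allI impI)
  fix j k assume "j < l" "k < l"
  have "(T j p * T k q) * T i v = (T j p * T i v) * T k q" by (simp add: algebra_simps)
  also have "\<dots> = T i p * (T j v * T k q)"
    using pv \<open>i < l\<close> \<open>j < l\<close> unfolding coeff_proportional_def by (simp add: algebra_simps)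
  also have "\<dots> = T j q * (T i p * T k v)"
    using vq \<open>j < l\<close> \<open>k < l\<close> unfolding coeff_proportional_def by (simp add: algebra_simps)
  also have "\<dots> = (T j q * T k p) * T i v"
    using pv \<open>i < l\<close> \<open>k < l\<close> unfolding coeff_proportional_def by (simp add: algebra_simps)
  finally show "T j p * T k q = T j q * T k p" using \<open>T i v \<noteq> 0\<close> by simp
qed

lemma senior_parts_rank_one_imp_proportional:
  assumes "\<forall>j<l. \<exists>c. senior_part L (T j) = (\<lambda>m. c * Q m)" and "pt p \<in> L" "pt q \<in> L"
  shows "coeff_proportional l T p q"
  unfolding coeff_proportional_def
proof (intro allI impI)
  fix j k assume "j < l" "k < l"
  with assms(1) obtain cj ck where
    "senior_part L (T j) = (\<lambda>m. cj * Q m)" "senior_part L (T k) = (\<lambda>m. ck * Q m)" by blast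
  then have "T j m = cj * Q m" "T k m = ck * Q m" if "pt m \<in> L" for m
    using that by (metis senior_part_def)+
  with assms(2,3) show "T j p * T k q = T j q * T k p" by simp
qed

lemma principal_indices_proportional:
  assumes "finite (biindices l T)"
    and senior: "\<forall>L. admissible (biindices l T) L \<longrightarrow>
        (\<exists>Q. \<forall>j<l. \<exists>c. senior_part L (T j) = (\<lambda>m. c * Q m))"
    and "p \<in> principal_indices (biindices l T)" "q \<in> principal_indices (biindices l T)"
  shows "coeff_proportional l T p q"
proof (cases "\<exists>L. admissible (biindices l T) L")
  case True
  have chain: "coeff_proportional l T p' q'"
    if "p' \<in> admissible_points (biindices l T)" "q' \<in> admissible_points (biindices l T)"
      "fst p' < fst q'" for p' q'
  proof (rule admissible_points_chain[OF assms(1) _ _ that])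
    show "coeff_proportional l T p q" if "admissible (biindices l T) L" "pt p \<in> L" "pt q \<in> L" for L p q
      using senior that senior_parts_rank_one_imp_proportional by metis
    show "coeff_proportional l T p q"
      if "coeff_proportional l T p v" "coeff_proportional l T v q" "v \<in> biindices l T" for p v q
      using that coeff_proportional_trans unfolding biindices_def by blast
  qed
  have "p \<in> admissible_points (biindices l T)" "q \<in> admissible_points (biindices l T)"
    using True assms(3,4) unfolding principal_indices_def by auto
  with chain admissible_points_eq_if_fst_eq show ?thesis
    by (metis coeff_proportional_refl coeff_proportional_sym linorder_neqE_nat)
next
  case False
  then have "principal_indices (biindices l T) =
      {m \<in> biindices l T. \<forall>m'\<in>biindices l T. fst m' \<le> fst m \<and> snd m' \<le> snd m}"
    unfolding principal_indices_def by (rule if_not_P)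
  then have "p = q" using assms(3,4) by (auto simp: prod_eq_iff intro: antisym)
  then show ?thesis by (simp add: coeff_proportional_refl)
qed

lemma proportional_restrictions_multiples:
  assumes fin: "\<forall>j<l. finite {m. T j m \<noteq> 0}"
    and proportional: "\<And>p q. p \<in> V \<Longrightarrow> q \<in> V \<Longrightarrow> coeff_proportional l T p q"
  shows "\<exists>P. finite {m. P m \<noteq> 0} \<and>
    (\<forall>j<l. \<exists>c. (\<lambda>m. if m \<in> V then T j m else 0) = (\<lambda>m. c * P m))"
proof (cases "\<exists>i<l. \<exists>v\<in>V. T i v \<noteq> 0")
  case True
  then obtain i v where "i < l" "v \<in> V" "T i v \<noteq> 0" by blast
  define P where "P = (\<lambda>m. if m \<in> V then T i m else 0)"
  have "{m. P m \<noteq> 0} \<subseteq> {m. T i m \<noteq> 0}" unfolding P_def by auto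
  then have "finite {m. P m \<noteq> 0}" using fin \<open>i < l\<close> finite_subset by blast
  moreover have "(\<lambda>m. if m \<in> V then T j m else 0) = (\<lambda>m. T j v / T i v * P m)" if "j < l" for j
  proof
    fix m
    show "(if m \<in> V then T j m else 0) = T j v / T i v * P m"
    proof (cases "m \<in> V")
      case True
      then have "T i v * T j m = T i m * T j v"
        using proportional[OF \<open>v \<in> V\<close> True] \<open>i < l\<close> \<open>j < l\<close> unfolding coeff_proportional_def by blast
      with True \<open>T i v \<noteq> 0\<close> show ?thesis unfolding P_def by (simp add: field_simps)
    qed (simp add: P_def)
  qed
  ultimately show ?thesis by blast
next
  case False
  then show ?thesis by (intro exI[of _ "\<lambda>m. 0"]) auto
qed

theorem lemma1:
  fixes l :: nat and T :: "nat \<Rightarrow> diffop"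
  assumes fin: "\<forall>j<l. finite {m. T j m \<noteq> 0}"
    and nonempty: "biindices l T \<noteq> {}"
    and senior: "\<forall>L. admissible (biindices l T) L \<longrightarrow>
        (\<exists>q :: diffop. \<forall>j<l. \<exists>c :: complex. senior_part L (T j) = (\<lambda>m. c * q m))"
  shows "\<exists>P :: diffop. finite {m. P m \<noteq> 0} \<and>
           (\<forall>j<l. \<exists>c :: complex. principal_part (biindices l T) (T j) = (\<lambda>m. c * P m))"
proof -
  have "biindices l T = (\<Union>j<l. {m. T j m \<noteq> 0})" unfolding biindices_def by auto
  then have "finite (biindices l T)" using fin by simp
  have "principal_part (biindices l T) (T j) =
      (\<lambda>m. if m \<in> principal_indices (biindices l T) then T j m else 0)" if "j < l" for j
    using that by (intro principal_part_eq_restriction) (auto simp: biindices_def)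
  moreover have "\<exists>P. finite {m. P m \<noteq> 0} \<and> (\<forall>j<l. \<exists>c.
      (\<lambda>m. if m \<in> principal_indices (biindices l T) then T j m else 0) = (\<lambda>m. c * P m))"
    using proportional_restrictions_multiples[OF fin]
      principal_indices_proportional[OF \<open>finite (biindices l T)\<close> senior] by blast
  ultimately show ?thesis by simp
qed

end
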